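(* A complex symmetric tensor $S\in\mathbb{C}^{n\times n\times n}$ of order 3 belongs to $\mathrm{OW}_n(\mathbb{C})$ if and only if its slices $S_1,\dots,S_n$ are diagonalizable and pairwise commute.
   Context: For a symmetric tensor $S$ its $k$-th slice is $S_k=(S_{ijk})_{1\le i,j\le n}$. Identify $S$ with the cubic form $f(x)=\sum_{i,j,k}S_{ijk}x_ix_jx_k$. $\mathrm{OW}_n(\mathbb{C})$ is the set of $f\in\mathbb{C}[x_1,\dots,x_n]_3$ that can be written $f(x)=g(Ax)$ with $A\in M_n(\mathbb{C})$ satisfying $A^TA=\mathrm{Id}$ and $g=\alpha_1x_1^3+\cdots+\alpha_nx_n^3$, $\alpha_i\in\mathbb{C}$. *)

theory Defs
  imports "HOL-Analysis.Analysis"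
begin

text \<open>Order-3 tensors over C^n, indexed by a finite type 'n (n = CARD('n)).\<close>

definition symmetric_tensor :: "('n::finite \<Rightarrow> 'n \<Rightarrow> 'n \<Rightarrow> complex) \<Rightarrow> bool" where
  "symmetric_tensor S \<longleftrightarrow>
     (\<forall>i j k. S i j k = S j i k \<and> S i j k = S i k j \<and> S i j k = S k j i)"

definition slice :: "('n::finite \<Rightarrow> 'n \<Rightarrow> 'n \<Rightarrow> complex) \<Rightarrow> 'n \<Rightarrow> complex^'n^'n" where
  "slice S k = (\<chi> i j. S i j k)"

definition cubic_form :: "('n::finite \<Rightarrow> 'n \<Rightarrow> 'n \<Rightarrow> complex) \<Rightarrow> complex^'n \<Rightarrow> complex" where
  "cubic_form S x = (\<Sum>i\<in>UNIV. \<Sum>j\<in>UNIV. \<Sum>k\<in>UNIV. S i j k * x$i * x$j * x$k)"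

definition diagonal_cmat :: "complex^'n^'n \<Rightarrow> bool" where
  "diagonal_cmat D \<longleftrightarrow> (\<forall>i j. i \<noteq> j \<longrightarrow> D$i$j = 0)"

definition diagonalizable_cmat :: "complex^'n^'n \<Rightarrow> bool" where
  "diagonalizable_cmat M \<longleftrightarrow>
     (\<exists>(P::complex^'n^'n) (D::complex^'n^'n). invertible P \<and> diagonal_cmat D \<and> M = P ** D ** matrix_inv P)"

text \<open>OW_n(C): cubic forms f(x) = g(Ax) with A^T A = Id (complex orthogonal,
  plain transpose) and g = sum alpha_i x_i^3. Since C is infinite, equality of
  polynomials is equality of polynomial functions.\<close>
definition in_OW :: "('n::finite \<Rightarrow> 'n \<Rightarrow> 'n \<Rightarrow> complex) \<Rightarrow> bool" where
  "in_OW S \<longleftrightarrow>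
     (\<exists>(A::complex^'n^'n) (\<alpha>::'n \<Rightarrow> complex).
        transpose A ** A = mat 1 \<and>
        (\<forall>x. cubic_form S x = (\<Sum>i\<in>UNIV. \<alpha> i * ((A *v x)$i)^3)))"

end

theory Submission
  imports Defs
begin

text \<open>If f(x) = \<Sum>_a \<alpha>_a ((A x)_a)^3 with A^T A = 1, polarization recovers the tensor from f,
  and every slice is A^T diag(\<alpha>_a A_ak) A: the slices are simultaneously diagonalized by the
  orthogonal matrix A.
  Conversely, commuting diagonalizable matrices have a spanning set of joint eigenvectors. The slices
  are symmetric, so joint eigenvectors with distinct eigenvalues are orthogonal for the bilinear form
  x^T y. A maximal set of joint eigenvectors that is orthonormal for x^T y therefore spans: a
  nonzero complement of its span contains a joint eigenvector v with v^T v \<noteq> 0, which can be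
  normalized over \<complex>. The basis vectors are the rows of an orthogonal A with S_k = A^T diag(\<mu>_ak) A,
  and the symmetry of S forces \<mu>_ak = \<beta>_a A_ak, i.e. f(x) = \<Sum>_a \<beta>_a ((A x)_a)^3.\<close>

section \<open>Polarization\<close>

definition trilinear_form ::
    "('n::finite \<Rightarrow> 'n \<Rightarrow> 'n \<Rightarrow> complex) \<Rightarrow> complex^'n \<Rightarrow> complex^'n \<Rightarrow> complex^'n \<Rightarrow> complex" where
  "trilinear_form S x y z = (\<Sum>i\<in>UNIV. \<Sum>j\<in>UNIV. \<Sum>k\<in>UNIV. S i j k * x$i * y$j * z$k)"

lemma trilinear_form_add:
  "trilinear_form S (x + x') y z = trilinear_form S x y z + trilinear_form S x' y z"
  "trilinear_form S x (y + y') z = trilinear_form S x y z + trilinear_form S x y' z"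
  "trilinear_form S x y (z + z') = trilinear_form S x y z + trilinear_form S x y z'"
  by (simp_all add: trilinear_form_def algebra_simps sum.distrib)

lemma trilinear_form_swap12:
  assumes "symmetric_tensor S"
  shows "trilinear_form S x y z = trilinear_form S y x z"
proof -
  have "trilinear_form S x y z = (\<Sum>j\<in>UNIV. \<Sum>i\<in>UNIV. \<Sum>k\<in>UNIV. S i j k * x$i * y$j * z$k)"
    unfolding trilinear_form_def by (rule sum.swap)
  also have "\<dots> = trilinear_form S y x z"
    using assms unfolding trilinear_form_def symmetric_tensor_def
    by (intro sum.cong refl) (metis mult.commute mult.left_commute)
  finally show ?thesis .
qed

lemma trilinear_form_swap23:
  assumes "symmetric_tensor S"
  shows "trilinear_form S x y z = trilinear_form S x z y"
proof -
  have "trilinear_form S x y z = (\<Sum>i\<in>UNIV. \<Sum>k\<in>UNIV. \<Sum>j\<in>UNIV. S i j k * x$i * y$j * z$k)"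
    unfolding trilinear_form_def by (intro sum.cong refl sum.swap)
  also have "\<dots> = trilinear_form S x z y"
    using assms unfolding trilinear_form_def symmetric_tensor_def
    by (intro sum.cong refl) (metis mult.commute mult.left_commute)
  finally show ?thesis .
qed

lemma cubic_form_polarization:
  assumes "symmetric_tensor S"
  shows "cubic_form S (x + y + z) - cubic_form S (x + y) - cubic_form S (x + z) - cubic_form S (y + z)
           + cubic_form S x + cubic_form S y + cubic_form S z = 6 * trilinear_form S x y z"
proof -
  have cubic: "cubic_form S v = trilinear_form S v v v" for v
    by (simp add: cubic_form_def trilinear_form_def)
  show ?thesis
    unfolding cubic trilinear_form_add
    by (simp add: trilinear_form_swap12[OF assms] trilinear_form_swap23[OF assms])
qed

lemma trilinear_form_axis: "trilinear_form S (axis i 1) (axis j 1) (axis k 1) = S i j k"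
proof -
  have "(a::complex) * (if P then 1 else 0) = (if P then a else 0)" for a P by simp
  then show ?thesis unfolding trilinear_form_def axis_def by simp
qed

lemma symmetric_tensor_eqI:
  assumes "symmetric_tensor S" "symmetric_tensor T" "\<And>x. cubic_form S x = cubic_form T x"
  shows "S = T"
proof (intro ext)
  fix i j k
  let ?D = "\<lambda>i j k. S i j k - T i j k"
  have "symmetric_tensor ?D"
    using assms(1,2) unfolding symmetric_tensor_def by metis
  moreover have "cubic_form ?D x = 0" for x
    using assms(3)[of x] by (simp add: cubic_form_def sum_subtractf left_diff_distrib)
  ultimately have "trilinear_form ?D (axis i 1) (axis j 1) (axis k 1) = 0"
    using cubic_form_polarization[of ?D "axis i 1" "axis j 1" "axis k 1"] by simp
  then show "S i j k = T i j k" by (simp add: trilinear_form_axis)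
qed

section \<open>Sums of cubes of orthogonal coordinates\<close>

lemma sum_cube: "(\<Sum>i\<in>A. f i) ^ 3 = (\<Sum>i\<in>A. \<Sum>j\<in>A. \<Sum>k\<in>A. f i * f j * (f k :: 'a::comm_semiring_1))"
proof -
  have "(\<Sum>i\<in>A. f i) ^ 3 = (\<Sum>i\<in>A. f i * ((\<Sum>j\<in>A. f j) * (\<Sum>k\<in>A. f k)))"
    by (simp add: power3_eq_cube sum_distrib_right mult.assoc)
  also have "\<dots> = (\<Sum>i\<in>A. f i * (\<Sum>j\<in>A. \<Sum>k\<in>A. f j * f k))"
    by (simp only: sum_product)
  also have "\<dots> = (\<Sum>i\<in>A. \<Sum>j\<in>A. \<Sum>k\<in>A. f i * f j * f k)"
    by (simp only: sum_distrib_left mult.assoc)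
  finally show ?thesis .
qed

definition rows_cube_tensor :: "('m::finite \<Rightarrow> complex) \<Rightarrow> complex^'n^'m \<Rightarrow> 'n \<Rightarrow> 'n \<Rightarrow> 'n \<Rightarrow> complex" where
  "rows_cube_tensor \<beta> A i j k = (\<Sum>a\<in>UNIV. \<beta> a * A$a$i * A$a$j * A$a$k)"

lemma symmetric_rows_cube_tensor: "symmetric_tensor (rows_cube_tensor \<beta> A)"
  unfolding symmetric_tensor_def rows_cube_tensor_def by (simp add: mult_ac)

lemma cubic_form_rows_cube_tensor:
  "cubic_form (rows_cube_tensor \<beta> A) x = (\<Sum>a\<in>UNIV. \<beta> a * ((A *v x)$a) ^ 3)"
proof -
  have "cubic_form (rows_cube_tensor \<beta> A) x
      = (\<Sum>i\<in>UNIV. \<Sum>j\<in>UNIV. \<Sum>k\<in>UNIV. \<Sum>a\<in>UNIV.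
           \<beta> a * ((A$a$i * x$i) * (A$a$j * x$j) * (A$a$k * x$k)))"
    unfolding cubic_form_def rows_cube_tensor_def sum_distrib_right
    by (intro sum.cong refl) (simp add: mult_ac)
  also have "\<dots> = (\<Sum>a\<in>UNIV. \<Sum>i\<in>UNIV. \<Sum>j\<in>UNIV. \<Sum>k\<in>UNIV.
           \<beta> a * ((A$a$i * x$i) * (A$a$j * x$j) * (A$a$k * x$k)))"
    by (subst sum.swap, subst (2) sum.swap, subst (3) sum.swap) (rule refl)
  also have "\<dots> = (\<Sum>a\<in>UNIV. \<beta> a * ((A *v x)$a) ^ 3)"
    by (simp add: matrix_vector_mult_def sum_cube sum_distrib_left)
  finally show ?thesis .
qed

lemma in_OW_iff_rows_cube_tensor:
  fixes S :: "'n::finite \<Rightarrow> 'n \<Rightarrow> 'n \<Rightarrow> complex"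
  assumes "symmetric_tensor S"
  shows "in_OW S \<longleftrightarrow>
           (\<exists>(A::complex^'n^'n) \<beta>. transpose A ** A = mat 1 \<and> S = rows_cube_tensor \<beta> A)"
    (is "_ \<longleftrightarrow> ?decomposition")
proof
  assume "in_OW S"
  then obtain A :: "complex^'n^'n" and \<beta> where "transpose A ** A = mat 1"
    and "\<And>x. cubic_form S x = (\<Sum>a\<in>UNIV. \<beta> a * ((A *v x)$a) ^ 3)"
    unfolding in_OW_def by blast
  moreover from this(2) have "S = rows_cube_tensor \<beta> A"
    by (intro symmetric_tensor_eqI assms symmetric_rows_cube_tensor)
       (simp add: cubic_form_rows_cube_tensor)
  ultimately show ?decomposition by blast
next
  assume ?decomposition
  then obtain A :: "complex^'n^'n" and \<beta> where "transpose A ** A = mat 1" "S = rows_cube_tensor \<beta> A"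
    by blast
  then show "in_OW S"
    unfolding in_OW_def by (metis cubic_form_rows_cube_tensor)
qed

definition diag_mat :: "('n \<Rightarrow> 'a::zero) \<Rightarrow> 'a^'n^'n" where
  "diag_mat d = (\<chi> a b. if a = b then d a else 0)"

lemma diagonal_cmat_diag_mat: "diagonal_cmat (diag_mat d)"
  unfolding diagonal_cmat_def diag_mat_def by simp

lemma diag_mat_mult:
  fixes d e :: "'n::finite \<Rightarrow> 'a::semiring_1"
  shows "diag_mat d ** diag_mat e = diag_mat (\<lambda>a. d a * e a)"
proof -
  have "(\<Sum>c\<in>UNIV. (if a = c then d a else 0) * (if c = b then e c else 0))
      = (\<Sum>c\<in>UNIV. if c = a then (if a = b then d a * e a else 0) else 0)" for a b :: 'n
    by (intro sum.cong) auto
  then show ?thesis by (simp add: vec_eq_iff matrix_matrix_mult_def diag_mat_def)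
qed

lemma transpose_diag_mat_nth: "(transpose A ** diag_mat d)$i$b = A$b$i * (d b :: 'a::comm_semiring_1)"
proof -
  have "(\<Sum>a\<in>UNIV. A$a$i * (if a = b then d a else 0)) = (\<Sum>a\<in>UNIV. if a = b then A$a$i * d a else 0)"
    by (intro sum.cong) auto
  then show ?thesis
    by (simp add: matrix_matrix_mult_def transpose_def diag_mat_def)
qed

lemma transpose_diag_mat_mult_nth:
  "(transpose A ** diag_mat d ** C)$i$j = (\<Sum>a\<in>UNIV. A$a$i * d a * C$a$j :: 'a::comm_semiring_1)"
  by (simp add: matrix_matrix_mult_def[of "transpose A ** diag_mat d"] transpose_diag_mat_nth)

lemma slice_rows_cube_tensor:
  "slice (rows_cube_tensor \<beta> A) k = transpose A ** diag_mat (\<lambda>a. \<beta> a * A$a$k) ** A"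
  by (simp add: vec_eq_iff slice_def rows_cube_tensor_def transpose_diag_mat_mult_nth mult_ac)

lemma matrix_inv_unique:
  fixes P :: "'a::semiring_1^'n::finite^'n"
  assumes "P ** X = mat 1" "X ** P = mat 1"
  shows "matrix_inv P = X"
  unfolding matrix_inv_def
proof (rule some_equality)
  fix Y assume "P ** Y = mat 1 \<and> Y ** P = mat 1"
  then show "Y = X"
    by (metis assms(1) matrix_mul_assoc matrix_mul_lid matrix_mul_rid)
qed (use assms in simp)

lemma diagonalizable_orthogonal_conj:
  fixes A :: "complex^'n::finite^'n"
  assumes "transpose A ** A = mat 1"
  shows "diagonalizable_cmat (transpose A ** diag_mat d ** A)"
proof -
  have "A ** transpose A = mat 1"
    using assms by (rule matrix_left_right_inverse1)
  with assms have "invertible (transpose A)" "matrix_inv (transpose A) = A"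
    by (auto simp: invertible_def intro: matrix_inv_unique)
  then show ?thesis
    unfolding diagonalizable_cmat_def using diagonal_cmat_diag_mat by metis
qed

lemma orthogonal_conj_diag_mat_commute:
  fixes A :: "'a::comm_ring_1^'n::finite^'n"
  assumes "A ** transpose A = mat 1"
  shows "(transpose A ** diag_mat d ** A) ** (transpose A ** diag_mat e ** A)
       = (transpose A ** diag_mat e ** A) ** (transpose A ** diag_mat d ** A)"
proof -
  have conj_mult: "(transpose A ** D ** A) ** (transpose A ** E ** A) = transpose A ** (D ** E) ** A"
    for D E :: "'a^'n^'n"
    by (metis assms matrix_mul_assoc matrix_mul_rid)
  show ?thesis unfolding conj_mult diag_mat_mult by (simp add: mult.commute)
qed

lemma slices_rows_cube_tensor_diagonalizable_commuting:
  fixes A :: "complex^'n::finite^'n"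
  assumes "transpose A ** A = mat 1"
  shows "diagonalizable_cmat (slice (rows_cube_tensor \<beta> A) k)"
    and "slice (rows_cube_tensor \<beta> A) k ** slice (rows_cube_tensor \<beta> A) l
       = slice (rows_cube_tensor \<beta> A) l ** slice (rows_cube_tensor \<beta> A) k"
  unfolding slice_rows_cube_tensor
  using diagonalizable_orthogonal_conj[OF assms]
    orthogonal_conj_diag_mat_commute[OF matrix_left_right_inverse1[OF assms]] by blast+

section \<open>Joint eigenvectors of commuting diagonalizable matrices\<close>

lemma vector_smult_sum: "(c::'a::comm_ring_1) *s sum f A = (\<Sum>x\<in>A. c *s f x)"
  by (induction A rule: infinite_finite_induct) simp_all

lemma invertible_matrix_inv:
  fixes P :: "'a::semiring_1^'n::finite^'n"
  assumes "invertible P"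
  shows "P ** matrix_inv P = mat 1" "matrix_inv P ** P = mat 1"
proof -
  obtain X where "P ** X = mat 1" "X ** P = mat 1"
    using assms unfolding invertible_def by blast
  moreover from this have "matrix_inv P = X"
    by (rule matrix_inv_unique)
  ultimately show "P ** matrix_inv P = mat 1" "matrix_inv P ** P = mat 1"
    by simp_all
qed

lemma column_eigenvector_of_diagonalization:
  fixes M P :: "complex^'n::finite^'n"
  assumes "invertible P" "diagonal_cmat D" "M = P ** D ** matrix_inv P"
  shows "M *v column a P = D$a$a *s column a P"
proof -
  have "M ** P = P ** D"
    unfolding assms(3) by (metis invertible_matrix_inv(2)[OF assms(1)] matrix_mul_assoc matrix_mul_rid)
  moreover have "(P ** D)$i$a = P$i$a * D$a$a" for i
  proof -
    have "(P ** D)$i$a = (\<Sum>b\<in>UNIV. P$i$b * D$b$a)"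
      by (simp add: matrix_matrix_mult_def)
    also have "\<dots> = (\<Sum>b\<in>UNIV. if b = a then P$i$b * D$b$a else 0)"
      using assms(2) unfolding diagonal_cmat_def by (intro sum.cong) auto
    finally show ?thesis by simp
  qed
  moreover have "(M *v column a P)$i = (M ** P)$i$a" for i
    by (simp add: matrix_vector_mult_def matrix_matrix_mult_def column_def)
  ultimately show ?thesis
    by (simp add: vec_eq_iff column_def mult.commute)
qed

lemma diagonalizable_sum_of_eigenvectors:
  fixes M :: "complex^'n::finite^'n"
  assumes "diagonalizable_cmat M"
  obtains L u where "finite L" "\<forall>l\<in>L. M *v u l = l *s u l" "x = (\<Sum>l\<in>L. u l)"
proof -
  obtain P D :: "complex^'n^'n" where P: "invertible P" and D: "diagonal_cmat D"
    and M: "M = P ** D ** matrix_inv P"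
    using assms unfolding diagonalizable_cmat_def by blast
  define c where "c = matrix_inv P *v x"
  define u where "u = (\<lambda>l. \<Sum>a\<in>{a. D$a$a = l}. c$a *s column a P)"
  have "x = (\<Sum>a\<in>UNIV. c$a *s column a P)"
    unfolding c_def matrix_mult_sum[symmetric] matrix_vector_mul_assoc invertible_matrix_inv[OF P]
    by simp
  also have "\<dots> = (\<Sum>l\<in>(\<lambda>a. D$a$a) ` UNIV. u l)"
    unfolding u_def by (subst sum.image_gen[where g = "\<lambda>a. D$a$a"]) simp_all
  finally have "x = (\<Sum>l\<in>(\<lambda>a. D$a$a) ` UNIV. u l)" .
  moreover have "M *v u l = l *s u l" for l
    unfolding u_def vec.sum vec.scale column_eigenvector_of_diagonalization[OF P D M] vector_smult_sum
    by (intro sum.cong refl) (simp add: mult.commute)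
  ultimately show thesis
    by (intro that[of "(\<lambda>a. D$a$a) ` UNIV" u]) simp_all
qed

lemma eigenvectors_sum_eq_zero:
  fixes M :: "'a::field^'n::finite^'n"
  assumes "finite L" "\<forall>l\<in>L. M *v u l = l *s u l" "(\<Sum>l\<in>L. u l) = 0"
  shows "\<forall>l\<in>L. u l = 0"
  using assms
proof (induction L arbitrary: u rule: finite_induct)
  case empty
  then show ?case by simp
next
  case (insert l0 L)
  define w where "w = (\<lambda>l. (l - l0) *s u l)"
  have "(\<Sum>l\<in>L. w l) = M *v (\<Sum>l\<in>insert l0 L. u l) - l0 *s (\<Sum>l\<in>insert l0 L. u l)"
    using insert.hyps insert.prems(1) unfolding w_def vec.sum
    by (simp add: vector_smult_sum sum_subtractf)
  also have "\<dots> = 0"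
    using insert.prems(2) by simp
  finally have "(\<Sum>l\<in>L. w l) = 0" .
  moreover have "\<forall>l\<in>L. M *v w l = l *s w l"
    using insert.prems(1) unfolding w_def by (simp add: vec.diff vec.scale mult.commute)
  ultimately have "\<forall>l\<in>L. w l = 0"
    using insert.IH by blast
  then have "\<forall>l\<in>L. u l = 0"
    using insert.hyps(2) unfolding w_def by auto
  then show ?case
    using insert.hyps insert.prems(2) by simp
qed

text \<open>N maps each eigenspace of M into itself.\<close>

lemma eigencomponents_of_commuting_eigenvector:
  fixes M N :: "'a::field^'n::finite^'n"
  assumes "M ** N = N ** M" "N *v v = \<mu> *s v"
    and "finite L" "\<forall>l\<in>L. M *v u l = l *s u l" "v = (\<Sum>l\<in>L. u l)" "l \<in> L"
  shows "N *v u l = \<mu> *s u l"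
proof -
  define w where "w = (\<lambda>l. N *v u l - \<mu> *s u l)"
  have "(\<Sum>l\<in>L. w l) = 0"
    unfolding w_def sum_subtractf vec.sum[symmetric] vector_smult_sum[symmetric] assms(5)[symmetric]
    using assms(2) by simp
  moreover have "\<forall>l\<in>L. M *v w l = l *s w l"
  proof
    fix l assume "l \<in> L"
    have "M *v (N *v u l) = N *v (M *v u l)"
      by (simp add: matrix_vector_mul_assoc assms(1))
    with \<open>l \<in> L\<close> assms(4) show "M *v w l = l *s w l"
      unfolding w_def by (simp add: vec.diff vec.scale mult.commute)
  qed
  ultimately have "\<forall>l\<in>L. w l = 0"
    using eigenvectors_sum_eq_zero[OF assms(3)] by blast
  with assms(6) show ?thesis
    unfolding w_def by simp
qed

definition joint_eigenvectors :: "('k \<Rightarrow> 'a::semiring_1^'n^'n) \<Rightarrow> 'k set \<Rightarrow> ('a^'n) set" where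
  "joint_eigenvectors M K = {v. \<forall>k\<in>K. \<exists>\<mu>. M k *v v = \<mu> *s v}"

lemma span_joint_eigenvectors:
  fixes M :: "'k::finite \<Rightarrow> complex^'n::finite^'n"
  assumes diag: "\<forall>k. diagonalizable_cmat (M k)"
    and comm: "\<forall>k l. M k ** M l = M l ** M k"
  shows "vec.span (joint_eigenvectors M UNIV) = UNIV"
proof -
  have "vec.span (joint_eigenvectors M K) = UNIV" if "finite K" for K
    using that
  proof (induction K rule: finite_induct)
    case empty
    then show ?case by (auto simp: joint_eigenvectors_def intro: vec.span_base)
  next
    case (insert k0 K)
    have "joint_eigenvectors M K \<subseteq> vec.span (joint_eigenvectors M (insert k0 K))"
    proof
      fix v assume v: "v \<in> joint_eigenvectors M K"
      obtain L u where L: "finite L" "\<forall>l\<in>L. M k0 *v u l = l *s u l" "v = (\<Sum>l\<in>L. u l)"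
        using diagonalizable_sum_of_eigenvectors[OF diag[rule_format, of k0]] by metis
      have "u l \<in> joint_eigenvectors M (insert k0 K)" if "l \<in> L" for l
        unfolding joint_eigenvectors_def
      proof (intro CollectI ballI)
        fix k assume "k \<in> insert k0 K"
        then consider "k = k0" | "k \<in> K" by blast
        then show "\<exists>\<mu>. M k *v u l = \<mu> *s u l"
        proof cases
          case 2
          then obtain \<mu> where "M k *v v = \<mu> *s v"
            using v unfolding joint_eigenvectors_def by blast
          then show ?thesis
            using eigencomponents_of_commuting_eigenvector[OF comm[rule_format, of k0 k] _ L that] by blast
        qed (use L(2) that in blast)
      qed
      then show "v \<in> vec.span (joint_eigenvectors M (insert k0 K))"
        unfolding L(3) by (intro vec.span_sum vec.span_base)
    qed
    then show ?case
      using insert.IH vec.span_mono vec.span_span by (metis top.extremum_uniqueI)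
  qed
  then show ?thesis by simp
qed

section \<open>Orthonormal joint eigenbases of symmetric matrices\<close>

text \<open>The bilinear, not Hermitian, form x^T y: it is the one for which A^T A = 1 means orthonormal rows,
  and it has nonzero isotropic vectors.\<close>

definition bdot :: "'a::comm_semiring_1^'n::finite \<Rightarrow> 'a^'n \<Rightarrow> 'a" where
  "bdot x y = (\<Sum>i\<in>UNIV. x$i * y$i)"

lemma bdot_commute: "bdot x y = bdot y x"
  unfolding bdot_def by (simp add: mult.commute)

lemma bdot_add_left: "bdot (x + y) z = bdot x z + bdot y z"
  unfolding bdot_def by (simp add: algebra_simps sum.distrib)

lemma bdot_add_right: "bdot x (y + z) = bdot x y + bdot x z"
  unfolding bdot_def by (simp add: algebra_simps sum.distrib)

lemma bdot_diff_right: "bdot x (y - z) = bdot x y - bdot x (z :: 'a::comm_ring_1^'n::finite)"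
  unfolding bdot_def by (simp add: algebra_simps sum_subtractf)

lemma bdot_scale_left: "bdot (c *s x) y = c * bdot x y"
  unfolding bdot_def by (simp add: sum_distrib_left mult_ac)

lemma bdot_scale_right: "bdot x (c *s y) = c * bdot x y"
  unfolding bdot_def by (simp add: sum_distrib_left mult_ac)

lemma bdot_zero_right [simp]: "bdot x 0 = 0"
  unfolding bdot_def by simp

lemma bdot_sum_right: "bdot x (sum f A) = (\<Sum>a\<in>A. bdot x (f a))"
  by (induction A rule: infinite_finite_induct) (simp_all add: bdot_add_right)

lemma bdot_axis_right: "bdot x (axis i 1) = x$i"
proof -
  have "bdot x (axis i 1) = (\<Sum>j\<in>UNIV. if j = i then x$j else 0)"
    unfolding bdot_def axis_def by (intro sum.cong) auto
  then show ?thesis by simp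
qed

lemma bdot_matrix_vector_mult_right: "bdot x (M *v y) = bdot (transpose M *v x) y"
proof -
  have "bdot x (M *v y) = (\<Sum>i\<in>UNIV. \<Sum>j\<in>UNIV. x$i * M$i$j * y$j)"
    unfolding bdot_def matrix_vector_mult_def by (simp add: sum_distrib_left mult_ac)
  also have "\<dots> = (\<Sum>j\<in>UNIV. \<Sum>i\<in>UNIV. x$i * M$i$j * y$j)"
    by (rule sum.swap)
  also have "\<dots> = bdot (transpose M *v x) y"
    unfolding bdot_def matrix_vector_mult_def transpose_def by (simp add: sum_distrib_left mult_ac)
  finally show ?thesis .
qed

lemma bdot_nonzero_on_generator:
  fixes w :: "'a::field^'n::finite"
  assumes "y \<in> vec.span G" "bdot w y \<noteq> 0"
  obtains g where "g \<in> G" "bdot w g \<noteq> 0"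
proof -
  have "vec.subspace {z. bdot w z = 0}"
    unfolding vec.subspace_def by (simp add: bdot_add_right bdot_scale_right)
  then have "\<not> G \<subseteq> {z. bdot w z = 0}"
    using assms vec.span_minimal by blast
  then show thesis
    using that by blast
qed

definition bdot_orthonormal :: "('a::comm_semiring_1^'n::finite) set \<Rightarrow> bool" where
  "bdot_orthonormal Q \<longleftrightarrow> (\<forall>q\<in>Q. bdot q q = 1) \<and> (\<forall>q\<in>Q. \<forall>q'\<in>Q. q \<noteq> q' \<longrightarrow> bdot q q' = 0)"

lemma bdot_orthonormal_coefficient:
  assumes "finite Q" "bdot_orthonormal Q" "q \<in> Q"
  shows "bdot q (\<Sum>v\<in>Q. c v *s v) = c q"
proof -
  have "bdot q (\<Sum>v\<in>Q. c v *s v) = (\<Sum>v\<in>Q. c v * bdot q v)"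
    by (simp add: bdot_sum_right bdot_scale_right)
  also have "\<dots> = c q * bdot q q + (\<Sum>v\<in>Q - {q}. c v * bdot q v)"
    using assms(1,3) by (simp add: sum.remove)
  also have "(\<Sum>v\<in>Q - {q}. c v * bdot q v) = 0"
    using assms(2,3) unfolding bdot_orthonormal_def by (intro sum.neutral) fastforce
  finally show ?thesis
    using assms(2,3) unfolding bdot_orthonormal_def by simp
qed

lemma bdot_orthonormal_independent:
  fixes Q :: "('a::field^'n::finite) set"
  assumes "finite Q" "bdot_orthonormal Q"
  shows "vec.independent Q"
proof (rule vec.independent_if_scalars_zero[OF assms(1)])
  fix c q assume "(\<Sum>v\<in>Q. c v *s v) = 0" "q \<in> Q"
  then show "c q = 0"
    using bdot_orthonormal_coefficient[OF assms \<open>q \<in> Q\<close>, of c] by simp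
qed

lemma bdot_orthonormal_card_le:
  fixes Q :: "('a::field^'n::finite) set"
  assumes "finite Q" "bdot_orthonormal Q"
  shows "card Q \<le> CARD('n)"
proof -
  have "card Q \<le> vec.dim Q"
    using vec.independent_bound_general[OF bdot_orthonormal_independent[OF assms]] by simp
  also have "\<dots> \<le> vec.dim (UNIV :: ('a^'n) set)"
    by (rule vec.dim_subset) simp
  finally show ?thesis
    by (simp add: card_cart_basis)
qed

lemma symmetric_matrix_eigenvalues_eq:
  fixes M :: "'a::field^'n::finite^'n"
  assumes "transpose M = M" "M *v v = \<mu> *s v" "M *v e = \<nu> *s e" "bdot v e \<noteq> 0"
  shows "\<nu> = \<mu>"
proof -
  have "\<nu> * bdot v e = bdot v (M *v e)"
    by (simp add: assms(3) bdot_scale_right)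
  also have "\<dots> = bdot (M *v v) e"
    by (simp add: bdot_matrix_vector_mult_right assms(1))
  also have "\<dots> = \<mu> * bdot v e"
    by (simp add: assms(2) bdot_scale_left)
  finally show ?thesis
    using assms(4) by simp
qed

lemma joint_eigenvectors_scale:
  fixes M :: "'k \<Rightarrow> 'a::field^'n::finite^'n"
  assumes "v \<in> joint_eigenvectors M K"
  shows "c *s v \<in> joint_eigenvectors M K"
  unfolding joint_eigenvectors_def
proof (intro CollectI ballI)
  fix k assume "k \<in> K"
  with assms obtain \<mu> where "M k *v v = \<mu> *s v"
    unfolding joint_eigenvectors_def by blast
  then have "M k *v (c *s v) = \<mu> *s (c *s v)"
    by (simp add: vec.scale mult.commute)
  then show "\<exists>\<mu>. M k *v (c *s v) = \<mu> *s (c *s v)" ..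
qed

lemma joint_eigenvectors_add:
  fixes M :: "'k \<Rightarrow> 'a::field^'n::finite^'n"
  assumes "\<forall>k. transpose (M k) = M k"
    and "v \<in> joint_eigenvectors M K" "e \<in> joint_eigenvectors M K" "bdot v e \<noteq> 0"
  shows "v + e \<in> joint_eigenvectors M K"
  unfolding joint_eigenvectors_def
proof (intro CollectI ballI)
  fix k assume "k \<in> K"
  with assms(2,3) obtain \<mu> \<nu> where "M k *v v = \<mu> *s v" "M k *v e = \<nu> *s e"
    unfolding joint_eigenvectors_def by blast
  moreover from this have "\<nu> = \<mu>"
    by (intro symmetric_matrix_eigenvalues_eq[OF spec[OF assms(1)] _ _ assms(4)])
  ultimately show "\<exists>\<mu>. M k *v (v + e) = \<mu> *s (v + e)"
    by (intro exI[of _ \<mu>]) (simp add: vec.add)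
qed

text \<open>Only the q with bdot q e \<noteq> 0 contribute, and by symmetry they share the eigenvalues of e.\<close>

lemma joint_eigenvectors_diff_projection:
  fixes M :: "'k \<Rightarrow> 'a::field^'n::finite^'n"
  assumes "\<forall>k. transpose (M k) = M k" "Q \<subseteq> joint_eigenvectors M K" "e \<in> joint_eigenvectors M K"
  shows "e - (\<Sum>q\<in>Q. bdot q e *s q) \<in> joint_eigenvectors M K"
  unfolding joint_eigenvectors_def
proof (intro CollectI ballI)
  fix k assume "k \<in> K"
  with assms(3) obtain \<mu> where \<mu>: "M k *v e = \<mu> *s e"
    unfolding joint_eigenvectors_def by blast
  have "M k *v (bdot q e *s q) = \<mu> *s (bdot q e *s q)" if "q \<in> Q" for q
  proof (cases "bdot q e = 0")
    case False
    obtain \<nu> where "M k *v q = \<nu> *s q"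
      using assms(2) \<open>q \<in> Q\<close> \<open>k \<in> K\<close> unfolding joint_eigenvectors_def by blast
    moreover from this have "\<mu> = \<nu>"
      using False by (intro symmetric_matrix_eigenvalues_eq[OF spec[OF assms(1)] _ \<mu>])
    ultimately show ?thesis
      by (simp add: vec.scale mult.commute)
  qed simp
  then have "M k *v (\<Sum>q\<in>Q. bdot q e *s q) = \<mu> *s (\<Sum>q\<in>Q. bdot q e *s q)"
    unfolding vec.sum vector_smult_sum by (intro sum.cong) auto
  then show "\<exists>\<mu>. M k *v (e - (\<Sum>q\<in>Q. bdot q e *s q)) = \<mu> *s (e - (\<Sum>q\<in>Q. bdot q e *s q))"
    using \<mu> by (intro exI[of _ \<mu>]) (simp add: vec.diff)
qed

lemma bdot_orthonormal_diff_projection: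
  fixes Q :: "('a::comm_ring_1^'n::finite) set"
  assumes "finite Q" "bdot_orthonormal Q" "q \<in> Q"
  shows "bdot q (e - (\<Sum>q\<in>Q. bdot q e *s q)) = 0"
  using bdot_orthonormal_coefficient[OF assms, of "\<lambda>q. bdot q e"] by (simp add: bdot_diff_right)

lemma exists_orthogonal_joint_eigenvector_pair:
  fixes M :: "'k \<Rightarrow> complex^'n::finite^'n"
  defines "J \<equiv> joint_eigenvectors M UNIV"
  assumes sym: "\<forall>k. transpose (M k) = M k" and span: "vec.span J = UNIV"
    and Q: "finite Q" "bdot_orthonormal Q" "Q \<subseteq> J" and incomplete: "vec.span Q \<noteq> UNIV"
  obtains w e where "w \<in> J" "e \<in> J" "\<forall>q\<in>Q. bdot q w = 0" "\<forall>q\<in>Q. bdot q e = 0" "bdot w e \<noteq> 0"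
proof -
  let ?perp = "\<lambda>e. e - (\<Sum>q\<in>Q. bdot q e *s q)"
  have perp_J: "?perp e \<in> J" if "e \<in> J" for e
    using joint_eigenvectors_diff_projection[OF sym] Q(3) that unfolding J_def by blast
  have perp_orth: "\<forall>q\<in>Q. bdot q (?perp e) = 0" for e
    using bdot_orthonormal_diff_projection[OF Q(1,2)] by blast
  obtain e0 where e0: "e0 \<in> J" "e0 \<notin> vec.span Q"
    using incomplete span vec.span_minimal[of J "vec.span Q"] vec.subspace_span by blast
  define w where "w = ?perp e0"
  have "w \<noteq> 0"
  proof
    assume "w = 0"
    then have "e0 = (\<Sum>q\<in>Q. bdot q e0 *s q)"
      unfolding w_def by simp
    also have "\<dots> \<in> vec.span Q"
      by (intro vec.span_sum vec.span_scale vec.span_base)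
    finally show False
      using e0(2) by simp
  qed
  then obtain i where "bdot w (axis i 1) \<noteq> 0"
    by (auto simp: bdot_axis_right vec_eq_iff)
  then obtain e1 where e1: "e1 \<in> J" "bdot w e1 \<noteq> 0"
    using bdot_nonzero_on_generator[of "axis i 1" J w] span by blast
  define e where "e = ?perp e1"
  have w_orth: "\<forall>q\<in>Q. bdot q w = 0"
    unfolding w_def using perp_orth by blast
  then have "bdot w (\<Sum>q\<in>Q. bdot q e1 *s q) = 0"
    by (simp add: bdot_sum_right bdot_scale_right bdot_commute)
  then have "bdot w e \<noteq> 0"
    using e1(2) unfolding e_def by (simp add: bdot_diff_right)
  moreover have "w \<in> J" "e \<in> J"
    unfolding w_def e_def using perp_J e0(1) e1(1) by blast+
  moreover have "\<forall>q\<in>Q. bdot q e = 0"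
    unfolding e_def using perp_orth by blast
  ultimately show thesis
    using that w_orth by blast
qed

lemma exists_nonisotropic_orthogonal_joint_eigenvector:
  fixes M :: "'k \<Rightarrow> complex^'n::finite^'n"
  defines "J \<equiv> joint_eigenvectors M UNIV"
  assumes sym: "\<forall>k. transpose (M k) = M k" and span: "vec.span J = UNIV"
    and Q: "finite Q" "bdot_orthonormal Q" "Q \<subseteq> J" and incomplete: "vec.span Q \<noteq> UNIV"
  obtains v where "v \<in> J" "\<forall>q\<in>Q. bdot q v = 0" "bdot v v \<noteq> 0"
proof -
  obtain w e where wJ: "w \<in> J" and eJ: "e \<in> J" and w_orth: "\<forall>q\<in>Q. bdot q w = 0"
    and e_orth: "\<forall>q\<in>Q. bdot q e = 0" and we: "bdot w e \<noteq> 0"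
    using exists_orthogonal_joint_eigenvector_pair[OF sym span[unfolded J_def] Q[unfolded J_def]
        incomplete] unfolding J_def by blast
  consider "bdot w w \<noteq> 0" | "bdot e e \<noteq> 0" | "bdot w w = 0" "bdot e e = 0"
    by blast
  then show thesis
  proof cases
    case 1
    then show thesis
      using that wJ w_orth by blast
  next
    case 2
    then show thesis
      using that eJ e_orth by blast
  next
    case 3
    then have "bdot (w + e) (w + e) = 2 * bdot w e"
      by (simp add: bdot_add_left bdot_add_right bdot_commute[of e w])
    moreover have "w + e \<in> J"
      using joint_eigenvectors_add[OF sym] wJ eJ we unfolding J_def by blast
    ultimately show thesis
      using that[of "w + e"] w_orth e_orth we by (simp add: bdot_add_right)
  qed
qed

lemma bdot_normalize:
  fixes v :: "complex^'n::finite"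
  assumes "bdot v v \<noteq> 0"
  shows "bdot ((1 / csqrt (bdot v v)) *s v) ((1 / csqrt (bdot v v)) *s v) = 1"
proof -
  have "csqrt (bdot v v) * csqrt (bdot v v) = bdot v v"
    using power2_csqrt[of "bdot v v"] by (simp add: power2_eq_square)
  with assms show ?thesis
    by (simp add: bdot_scale_left bdot_scale_right field_simps)
qed

lemma orthonormal_joint_eigenvectors_extend:
  fixes M :: "'k \<Rightarrow> complex^'n::finite^'n"
  defines "J \<equiv> joint_eigenvectors M UNIV"
  assumes sym: "\<forall>k. transpose (M k) = M k" and span: "vec.span J = UNIV"
    and Q: "finite Q" "bdot_orthonormal Q" "Q \<subseteq> J" and incomplete: "vec.span Q \<noteq> UNIV"
  obtains v where "v \<in> J" "v \<notin> Q" "bdot_orthonormal (insert v Q)"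
proof -
  obtain v where v: "v \<in> J" "\<forall>q\<in>Q. bdot q v = 0" "bdot v v \<noteq> 0"
    using exists_nonisotropic_orthogonal_joint_eigenvector[OF sym span[unfolded J_def] Q[unfolded J_def]
        incomplete] unfolding J_def by blast
  define u where "u = (1 / csqrt (bdot v v)) *s v"
  have "u \<in> J"
    unfolding u_def J_def using v(1) J_def by (simp add: joint_eigenvectors_scale)
  moreover have unit: "bdot u u = 1"
    unfolding u_def using v(3) by (rule bdot_normalize)
  moreover have orth: "\<forall>q\<in>Q. bdot q u = 0"
    unfolding u_def using v(2) by (simp add: bdot_scale_right)
  moreover from unit orth have "u \<notin> Q"
    by auto
  moreover from unit orth have "bdot_orthonormal (insert u Q)"
    using Q(2) unfolding bdot_orthonormal_def by (auto simp: bdot_commute)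
  ultimately show thesis
    using that by blast
qed

lemma exists_orthonormal_joint_eigenbasis:
  fixes M :: "'k::finite \<Rightarrow> complex^'n::finite^'n"
  assumes sym: "\<forall>k. transpose (M k) = M k"
    and diag: "\<forall>k. diagonalizable_cmat (M k)"
    and comm: "\<forall>k l. M k ** M l = M l ** M k"
  obtains Q where "finite Q" "bdot_orthonormal Q" "Q \<subseteq> joint_eigenvectors M UNIV"
    "card Q = CARD('n)"
proof -
  let ?admissible = "\<lambda>Q. finite Q \<and> bdot_orthonormal Q \<and> Q \<subseteq> joint_eigenvectors M UNIV"
  have "?admissible {}"
    unfolding bdot_orthonormal_def by simp
  moreover have "\<forall>Q. ?admissible Q \<longrightarrow> card Q < CARD('n) + 1"
    using bdot_orthonormal_card_le by fastforce
  ultimately obtain Q where Q: "?admissible Q" and maximal: "\<forall>Q'. ?admissible Q' \<longrightarrow> card Q' \<le> card Q"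
    using ex_has_greatest_nat[of ?admissible "{}" card "CARD('n) + 1"] by blast
  have "vec.span Q = UNIV"
  proof (rule ccontr)
    assume "vec.span Q \<noteq> UNIV"
    then obtain v where "v \<in> joint_eigenvectors M UNIV" "v \<notin> Q" "bdot_orthonormal (insert v Q)"
      using orthonormal_joint_eigenvectors_extend[OF sym span_joint_eigenvectors[OF diag comm]] Q by blast
    then have "card (insert v Q) \<le> card Q"
      using maximal[rule_format, of "insert v Q"] Q by simp
    then show False
      using \<open>v \<notin> Q\<close> Q by simp
  qed
  then have "CARD('n) \<le> card Q"
    using vec.span_card_ge_dim[of Q UNIV] Q by (simp add: card_cart_basis)
  then have "card Q = CARD('n)"
    using Q bdot_orthonormal_card_le[of Q] by auto
  with Q show thesis
    using that by blast
qed

lemma matrix_mult_transpose_nth: "(A ** transpose A)$a$b = bdot (A$a) (A$b)"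
  by (simp add: matrix_matrix_mult_def transpose_def bdot_def)

lemma orthogonal_matrix_of_orthonormal_set:
  fixes Q :: "('a::field^'n::finite) set"
  assumes "finite Q" "bdot_orthonormal Q" "card Q = CARD('n)"
  obtains A :: "'a^'n^'n" where "transpose A ** A = mat 1" "\<forall>a. A$a \<in> Q"
proof -
  obtain g where g: "bij_betw g (UNIV :: 'n set) Q"
    using finite_same_card_bij[of "UNIV :: 'n set" Q] assms(1,3) by auto
  define A :: "'a^'n^'n" where "A = (\<chi> a. g a)"
  have rows: "A$a \<in> Q" for a
    using g unfolding A_def bij_betw_def by auto
  have distinct: "A$a \<noteq> A$b" if "a \<noteq> b" for a b
    using g that unfolding A_def bij_betw_def inj_on_def by auto
  have "(A ** transpose A)$a$b = mat 1 $a$b" for a b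
  proof -
    have "(A ** transpose A)$a$b = bdot (A$a) (A$b)"
      by (rule matrix_mult_transpose_nth)
    also have "\<dots> = (if a = b then 1 else 0)"
      using assms(2) rows distinct unfolding bdot_orthonormal_def by auto
    finally show ?thesis
      by (simp add: mat_def)
  qed
  then have "A ** transpose A = mat 1"
    by (simp add: vec_eq_iff)
  then show thesis
    using that[of A] rows matrix_left_right_inverse1 by blast
qed

lemma eq_orthogonal_conj_diag_mat:
  fixes M A :: "'a::comm_ring_1^'n::finite^'n"
  assumes "transpose A ** A = mat 1" "\<forall>a. M *v A$a = \<mu> a *s A$a"
  shows "M = transpose A ** diag_mat \<mu> ** A"
proof -
  have "(M ** transpose A)$i$a = (transpose A ** diag_mat \<mu>)$i$a" for i a
  proof -
    have "(M ** transpose A)$i$a = (M *v A$a)$i"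
      by (simp add: matrix_matrix_mult_def matrix_vector_mult_def transpose_def)
    then show ?thesis
      using assms(2) by (simp add: transpose_diag_mat_nth mult.commute)
  qed
  then have "M ** transpose A = transpose A ** diag_mat \<mu>"
    by (simp add: vec_eq_iff)
  then show ?thesis
    by (metis assms(1) matrix_mul_assoc matrix_mul_rid)
qed

lemma rows_cube_tensor_of_joint_eigenbasis:
  fixes S :: "'n::finite \<Rightarrow> 'n \<Rightarrow> 'n \<Rightarrow> complex" and A :: "complex^'n^'n"
  assumes sym: "symmetric_tensor S" and orth: "transpose A ** A = mat 1"
    and eig: "\<forall>a k. slice S k *v A$a = \<mu> a k *s A$a"
  shows "S = rows_cube_tensor (\<lambda>a. \<Sum>r\<in>UNIV. A$a$r * \<mu> a r) A"
proof -
  have slice: "slice S k = transpose A ** diag_mat (\<lambda>a. \<mu> a k) ** A" for k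
    using eq_orthogonal_conj_diag_mat[OF orth, of "slice S k" "\<lambda>a. \<mu> a k"] eig by simp
  have unit: "bdot (A$a) (A$a) = 1" for a
    using matrix_left_right_inverse1[OF orth] by (simp flip: matrix_mult_transpose_nth add: mat_def)
  have slice_nth: "(slice S k *v v)$r = (\<Sum>c\<in>UNIV. S r c k * v$c)" for k v r
    by (simp add: slice_def matrix_vector_mult_def)
  have swap13: "S i j k = S k j i" for i j k
    using sym unfolding symmetric_tensor_def by blast
  have eigenvalue_factor: "\<mu> a k = (\<Sum>r\<in>UNIV. A$a$r * \<mu> a r) * A$a$k" for a k
  proof -
    txt \<open>\<mu> a k = a^T S_k a for the a-th row; symmetry of S moves k out of the slice index.\<close>
    have "\<mu> a k = bdot (A$a) (slice S k *v A$a)"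
      using unit[of a] eig by (simp add: bdot_scale_right)
    also have "\<dots> = (\<Sum>r\<in>UNIV. A$a$r * (slice S r *v A$a)$k)"
      unfolding bdot_def slice_nth swap13[of _ _ k] ..
    also have "\<dots> = (\<Sum>r\<in>UNIV. A$a$r * \<mu> a r) * A$a$k"
      using eig by (simp add: sum_distrib_left sum_distrib_right mult_ac)
    finally show ?thesis .
  qed
  show ?thesis
  proof (intro ext)
    fix i j k
    have "S i j k = (\<Sum>a\<in>UNIV. A$a$i * \<mu> a k * A$a$j)"
      using arg_cong[OF slice[of k], of "\<lambda>M. M$i$j"] by (simp add: slice_def transpose_diag_mat_mult_nth)
    also have "\<dots> = rows_cube_tensor (\<lambda>a. \<Sum>r\<in>UNIV. A$a$r * \<mu> a r) A i j k"
      unfolding rows_cube_tensor_def by (intro sum.cong refl) (subst eigenvalue_factor, simp add: mult_ac)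
    finally show "S i j k = rows_cube_tensor (\<lambda>a. \<Sum>r\<in>UNIV. A$a$r * \<mu> a r) A i j k" .
  qed
qed

lemma transpose_slice: "symmetric_tensor S \<Longrightarrow> transpose (slice S k) = slice S k"
  unfolding symmetric_tensor_def slice_def transpose_def by (simp add: vec_eq_iff)

lemma rows_cube_tensor_if_slices_diagonalizable_commuting:
  fixes S :: "'n::finite \<Rightarrow> 'n \<Rightarrow> 'n \<Rightarrow> complex"
  assumes sym: "symmetric_tensor S"
    and diag: "\<forall>k. diagonalizable_cmat (slice S k)"
    and comm: "\<forall>k l. slice S k ** slice S l = slice S l ** slice S k"
  obtains A :: "complex^'n^'n" and \<beta> where "transpose A ** A = mat 1" "S = rows_cube_tensor \<beta> A"
proof -
  obtain Q where Q: "finite Q" "bdot_orthonormal Q" "Q \<subseteq> joint_eigenvectors (slice S) UNIV"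
      "card Q = CARD('n)"
    using exists_orthonormal_joint_eigenbasis[OF allI[OF transpose_slice[OF sym]] diag comm] .
  obtain A :: "complex^'n^'n" where A: "transpose A ** A = mat 1" "\<forall>a. A$a \<in> Q"
    using orthogonal_matrix_of_orthonormal_set[OF Q(1,2,4)] by blast
  have "\<forall>a k. \<exists>\<mu>. slice S k *v A$a = \<mu> *s A$a"
    using A(2) Q(3) unfolding joint_eigenvectors_def by blast
  then obtain \<mu> where "\<forall>a k. slice S k *v A$a = \<mu> a k *s A$a"
    by metis
  then have "S = rows_cube_tensor (\<lambda>a. \<Sum>r\<in>UNIV. A$a$r * \<mu> a r) A"
    by (rule rows_cube_tensor_of_joint_eigenbasis[OF sym A(1)])
  with A(1) show thesis
    by (rule that)
qed

theorem theorem10: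
  fixes S :: "'n::finite \<Rightarrow> 'n \<Rightarrow> 'n \<Rightarrow> complex"
  assumes "symmetric_tensor S"
  shows "in_OW S \<longleftrightarrow>
           ((\<forall>k. diagonalizable_cmat (slice S k)) \<and>
            (\<forall>k l. slice S k ** slice S l = slice S l ** slice S k))"
proof
  assume "in_OW S"
  then obtain A :: "complex^'n^'n" and \<beta> where "transpose A ** A = mat 1" "S = rows_cube_tensor \<beta> A"
    using in_OW_iff_rows_cube_tensor[OF assms] by blast
  then show "(\<forall>k. diagonalizable_cmat (slice S k)) \<and>
             (\<forall>k l. slice S k ** slice S l = slice S l ** slice S k)"
    using slices_rows_cube_tensor_diagonalizable_commuting[of A \<beta>] by simp
next
  assume "(\<forall>k. diagonalizable_cmat (slice S k)) \<and>
          (\<forall>k l. slice S k ** slice S l = slice S l ** slice S k)"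
  then obtain A :: "complex^'n^'n" and \<beta> where "transpose A ** A = mat 1" "S = rows_cube_tensor \<beta> A"
    using rows_cube_tensor_if_slices_diagonalizable_commuting[OF assms] by blast
  then show "in_OW S"
    using in_OW_iff_rows_cube_tensor[OF assms] by blast
qed

end
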